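(* Let $\alpha\in(0,1)$, $\sigma=1-\frac{\alpha}{2}$, and let $c^{(\alpha,\sigma)}_{i,k}$ be the L2-1$_\sigma$ coefficients defined in the context. Then for every $k\ge 0$, $$\frac{1}{c^{(\alpha,\sigma)}_{1,k}}<\frac{2\Gamma(1-\alpha)}{\tilde a^{\alpha}}\big((k+\sigma)\tau\big)^{\alpha}.$$
   Context: Let $\tilde a>0$, $T>\tilde a$, $N\in\mathbb{Z}^+$, $\tau=(T-\tilde a)/N$, $t_k=\tilde a+k\tau$ ($k=0,\dots,N$), and $t_{k+\sigma}=t_k+\sigma\tau$. For $1\le i\le k$ define $$a^{(\alpha,\sigma)}_{i,k}=\Big(\log\tfrac{t_{k+\sigma}}{t_{i-1}}\Big)^{1-\alpha}-\Big(\log\tfrac{t_{k+\sigma}}{t_{i}}\Big)^{1-\alpha},$$ $$b^{(\alpha,\sigma)}_{i,k}=\frac{1}{\log\frac{t_{i+1}}{t_{i-1}}}\Big\{\tfrac{2}{2-\alpha}\Big[\Big(\log\tfrac{t_{k+\sigma}}{t_{i-1}}\Big)^{2-\alpha}-\Big(\log\tfrac{t_{k+\sigma}}{t_{i}}\Big)^{2-\alpha}\Big]-\log\tfrac{t_i}{t_{i-1}}\Big[\Big(\log\tfrac{t_{k+\sigma}}{t_{i}}\Big)^{1-\alpha}+\Big(\log\tfrac{t_{k+\sigma}}{t_{i-1}}\Big)^{1-\alpha}\Big]\Big\}.$$ The coefficients are: $c^{(\alpha,\sigma)}_{1,0}=\frac{1}{\Gamma(2-\alpha)\log\frac{t_1}{t_0}}\big(\log\frac{t_\sigma}{t_0}\big)^{1-\alpha}$;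 for $k=1$: $c^{(\alpha,\sigma)}_{1,1}=\frac{a^{(\alpha,\sigma)}_{1,1}-b^{(\alpha,\sigma)}_{1,1}}{\Gamma(2-\alpha)\log\frac{t_1}{t_0}}$, $c^{(\alpha,\sigma)}_{2,1}=\frac{b^{(\alpha,\sigma)}_{1,1}+(\log\frac{t_{1+\sigma}}{t_1})^{1-\alpha}}{\Gamma(2-\alpha)\log\frac{t_2}{t_1}}$; for $k\ge2$: $c^{(\alpha,\sigma)}_{1,k}=\frac{a^{(\alpha,\sigma)}_{1,k}-b^{(\alpha,\sigma)}_{1,k}}{\Gamma(2-\alpha)\log\frac{t_1}{t_0}}$, $c^{(\alpha,\sigma)}_{i,k}=\frac{a^{(\alpha,\sigma)}_{i,k}+b^{(\alpha,\sigma)}_{i-1,k}-b^{(\alpha,\sigma)}_{i,k}}{\Gamma(2-\alpha)\log\frac{t_i}{t_{i-1}}}$ for $2\le i\le k$, and $c^{(\alpha,\sigma)}_{k+1,k}=\frac{b^{(\alpha,\sigma)}_{k,k}+(\log\frac{t_{k+\sigma}}{t_k})^{1-\alpha}}{\Gamma(2-\alpha)\log\frac{t_{k+1}}{t_k}}$. *)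

theory Defs
  imports "HOL-Analysis.Analysis"
begin

definition tau :: "real \<Rightarrow> real \<Rightarrow> nat \<Rightarrow> real" where
  "tau a T N = (T - a) / real N"

definition tpt :: "real \<Rightarrow> real \<Rightarrow> nat \<Rightarrow> real \<Rightarrow> real" where
  "tpt a T N s = a + s * tau a T N"

definition acoef :: "real \<Rightarrow> real \<Rightarrow> real \<Rightarrow> real \<Rightarrow> nat \<Rightarrow> nat \<Rightarrow> nat \<Rightarrow> real" where
  "acoef \<alpha> \<sigma> a T N i k =
     (ln (tpt a T N (real k + \<sigma>) / tpt a T N (real i - 1))) powr (1 - \<alpha>)
   - (ln (tpt a T N (real k + \<sigma>) / tpt a T N (real i))) powr (1 - \<alpha>)"

definition bcoef :: "real \<Rightarrow> real \<Rightarrow> real \<Rightarrow> real \<Rightarrow> nat \<Rightarrow> nat \<Rightarrow> nat \<Rightarrow> real" where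
  "bcoef \<alpha> \<sigma> a T N i k =
     (1 / ln (tpt a T N (real i + 1) / tpt a T N (real i - 1))) *
     ( (2 / (2 - \<alpha>)) *
         ( (ln (tpt a T N (real k + \<sigma>) / tpt a T N (real i - 1))) powr (2 - \<alpha>)
         - (ln (tpt a T N (real k + \<sigma>) / tpt a T N (real i))) powr (2 - \<alpha>))
     - ln (tpt a T N (real i) / tpt a T N (real i - 1)) *
         ( (ln (tpt a T N (real k + \<sigma>) / tpt a T N (real i))) powr (1 - \<alpha>)
         + (ln (tpt a T N (real k + \<sigma>) / tpt a T N (real i - 1))) powr (1 - \<alpha>)))"

text \<open>The L2-1_sigma coefficients c_{i,k} (meaningful for 1 <= i <= k+1).\<close>
definition ccoef :: "real \<Rightarrow> real \<Rightarrow> real \<Rightarrow> real \<Rightarrow> nat \<Rightarrow> nat \<Rightarrow> nat \<Rightarrow> real" where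
  "ccoef \<alpha> \<sigma> a T N i k =
    (let t = tpt a T N; G = Gamma (2 - \<alpha>) in
     if k = 0 then
       (if i = 1 then (ln (t \<sigma> / t 0)) powr (1 - \<alpha>) / (G * ln (t 1 / t 0)) else 0)
     else if i = 1 then
       (acoef \<alpha> \<sigma> a T N 1 k - bcoef \<alpha> \<sigma> a T N 1 k) / (G * ln (t 1 / t 0))
     else if i \<le> k then
       (acoef \<alpha> \<sigma> a T N i k + bcoef \<alpha> \<sigma> a T N (i - 1) k - bcoef \<alpha> \<sigma> a T N i k)
         / (G * ln (t (real i) / t (real i - 1)))
     else if i = k + 1 then
       (bcoef \<alpha> \<sigma> a T N k k + (ln (t (real k + \<sigma>) / t (real k))) powr (1 - \<alpha>))
         / (G * ln (t (real k + 1) / t (real k)))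
     else 0)"

end

theory Submission
  imports Defs
begin

text \<open>Let A = ln (t_{k+\<sigma>} / t_0).  Everything rests on the lower bound
  c_{1,k} \<ge> A powr (-\<alpha>) / \<Gamma>(1-\<alpha>); since A = ln (1 + (k+\<sigma>)\<tau>/a) \<le> (k+\<sigma>)\<tau>/a,
  it gives the claim even without the factor 2.
  For k = 0 the bound follows from the concavity estimate \<sigma> ln (1+x) \<le> ln (1+\<sigma>x) and
  \<sigma> \<ge> 1-\<alpha>.  For k \<ge> 1 put B = ln (t_{k+\<sigma>} / t_1) and p = 1-\<alpha>.  Then
  \<Gamma>(2-\<alpha>) ln (t_1/t_0) c_{1,k} is A^p - B^p minus P / ln (t_2/t_0), where
  P = 2 \<integral>_B^A s^p ds - (A - B)(A^p + B^p) is twice the error of the trapezoid rule, and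
  ln (t_2/t_0) \<ge> A - B.  The tangent line and the second-order Taylor polynomial of the
  concave power s^p at A bound A^p - B^p - P / (A - B), and A^p - B^p itself, from below by
  p (A - B) A^(p-1), which is the required bound.\<close>

lemma powr_le_tangent:
  fixes x y p :: real
  assumes "0 < x" "0 < y" "0 \<le> p" "p \<le> 1"
  shows "y powr p \<le> x powr p + p * x powr (p - 1) * (y - x)"
proof -
  have "- p * x powr (p - 1) * (y - x) \<le> - (y powr p) - - (x powr p)"
  proof (rule f''_imp_f'[where f = "\<lambda>z. - (z powr p)" and C = "{0<..}"])
    show "DERIV (\<lambda>z. - (z powr p)) z :> - p * z powr (p - 1)" if "z \<in> {0<..}" for z
      using that by (auto intro!: derivative_eq_intros)
    show "DERIV (\<lambda>z. - p * z powr (p - 1)) z :> - p * ((p - 1) * z powr (p - 1 - 1))"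
      if "z \<in> {0<..}" for z
      using that by (auto intro!: derivative_eq_intros)
    show "0 \<le> - p * ((p - 1) * z powr (p - 1 - 1))" for z
      using assms by (simp add: mult_nonneg_nonpos mult_nonpos_nonneg)
  qed (use assms in auto)
  then show ?thesis by simp
qed

lemma powr_ge_quadratic_taylor:
  fixes x y q :: real
  assumes "0 < y" "y \<le> x" "1 \<le> q" "q \<le> 2"
  shows "x powr q + q * x powr (q - 1) * (y - x) + q * (q - 1) / 2 * x powr (q - 2) * (y - x)\<^sup>2
         \<le> y powr q"
proof -
  define f where "f z = z powr q - (x powr q + q * x powr (q - 1) * (z - x)
                          + q * (q - 1) / 2 * x powr (q - 2) * (z - x)\<^sup>2)" for z
  have f': "DERIV f z :> q * (z powr (q - 1) - (x powr (q - 1) + (q - 1) * x powr (q - 1 - 1) * (z - x)))"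
    if "0 < z" for z
    unfolding f_def using that
    by (auto intro!: derivative_eq_intros simp: power2_eq_square field_simps)
  have "f x \<le> f y"
  proof (rule DERIV_nonpos_imp_decreasing_open[OF \<open>y \<le> x\<close>])
    fix z assume z: "y < z" "z < x"
    have "z powr (q - 1) \<le> x powr (q - 1) + (q - 1) * x powr (q - 1 - 1) * (z - x)"
      using powr_le_tangent[of x z "q - 1"] z assms by auto
    then show "\<exists>d. DERIV f z :> d \<and> d \<le> 0"
      using f'[of z] z assms by (intro exI conjI) (auto intro!: mult_nonneg_nonpos)
  next
    show "continuous_on {y..x} f"
      using f' assms by (intro DERIV_atLeastAtMost_imp_continuous_on) (use less_le_trans in blast)
  qed
  then show ?thesis by (simp add: f_def)
qed

lemma powr_trapezoid_defect_le:
  fixes x y p :: real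
  assumes "0 < y" "y \<le> x" "0 \<le> p" "p \<le> 1"
  shows "2 / (p + 1) * (x powr (p + 1) - y powr (p + 1)) - (x - y) * (x powr p + y powr p)
         \<le> (x - y) * (x powr p - y powr p - p * (x - y) * x powr (p - 1))"
proof -
  have "x powr (p + 1) - y powr (p + 1)
        \<le> (p + 1) * (x powr p * (x - y) - p / 2 * x powr (p - 1) * (x - y)\<^sup>2)"
    using powr_ge_quadratic_taylor[of y x "p + 1"] assms by (simp add: algebra_simps power2_commute)
  then have "2 / (p + 1) * (x powr (p + 1) - y powr (p + 1))
             \<le> 2 * (x powr p * (x - y) - p / 2 * x powr (p - 1) * (x - y)\<^sup>2)"
    using assms by (simp add: field_simps)
  moreover have "2 * (x powr p * (x - y) - p / 2 * x powr (p - 1) * (x - y)\<^sup>2)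
                 - (x - y) * (x powr p + y powr p)
                 = (x - y) * (x powr p - y powr p - p * (x - y) * x powr (p - 1))"
    by (simp add: algebra_simps power2_eq_square)
  ultimately show ?thesis by linarith
qed

lemma powr_diff_minus_trapezoid_defect_ge:
  fixes x y h p :: real
  assumes "0 < y" "y < x" "x - y \<le> h" "0 \<le> p" "p \<le> 1"
  shows "p * (x - y) * x powr (p - 1)
         \<le> x powr p - y powr p
            - (2 / (p + 1) * (x powr (p + 1) - y powr (p + 1)) - (x - y) * (x powr p + y powr p)) / h"
proof -
  define P where "P = 2 / (p + 1) * (x powr (p + 1) - y powr (p + 1)) - (x - y) * (x powr p + y powr p)"
  have tangent: "p * (x - y) * x powr (p - 1) \<le> x powr p - y powr p"
    using powr_le_tangent[of x y p] assms by (simp add: algebra_simps)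
  show ?thesis
  proof (cases "P \<le> 0")
    case True
    then have "P / h \<le> 0"
      using assms by (simp add: divide_nonpos_pos)
    then show ?thesis
      using tangent by (simp add: P_def)
  next
    case False
    have "P / h \<le> P / (x - y)"
      using False assms by (intro divide_left_mono) auto
    also have "\<dots> \<le> x powr p - y powr p - p * (x - y) * x powr (p - 1)"
      using powr_trapezoid_defect_le[of y x p] assms by (simp add: P_def divide_le_eq mult.commute)
    finally show ?thesis by (simp add: P_def)
  qed
qed

lemma Gamma_two_minus:
  fixes \<alpha> :: real
  assumes "\<alpha> < 1"
  shows "Gamma (2 - \<alpha>) = (1 - \<alpha>) * Gamma (1 - \<alpha>)"
proof -
  have "1 - \<alpha> \<notin> \<int>\<^sub>\<le>\<^sub>0"
    using assms nonpos_Ints_nonpos by force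
  then show ?thesis
    using Gamma_plus1[of "1 - \<alpha>"] by simp
qed

lemma mult_ln_one_plus_le:
  fixes x s :: real
  assumes "0 \<le> x" "0 \<le> s" "s \<le> 1"
  shows "s * ln (1 + x) \<le> ln (1 + s * x)"
  using concave_onD[OF ln_concave, of s 1 "1 + x"] assms by (simp add: algebra_simps)

lemma tau_pos: "a < T \<Longrightarrow> 0 < N \<Longrightarrow> 0 < tau a T N"
  by (simp add: tau_def)

lemma tpt_less_tpt_iff: "a < T \<Longrightarrow> 0 < N \<Longrightarrow> tpt a T N s < tpt a T N s' \<longleftrightarrow> s < s'"
  by (simp add: tpt_def tau_pos)

lemma ccoef_1_0_ge:
  fixes \<alpha> \<sigma> a T :: real and N :: nat
  assumes "0 < \<alpha>" "\<alpha> < 1" "1 - \<alpha> \<le> \<sigma>" "\<sigma> \<le> 1" "0 < a" "a < T" "0 < N"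
  shows "ln (tpt a T N \<sigma> / a) powr (- \<alpha>) / Gamma (1 - \<alpha>) \<le> ccoef \<alpha> \<sigma> a T N 1 0"
proof -
  define x where "x = tau a T N / a"
  define L1 where "L1 = ln (1 + x)"
  define L\<sigma> where "L\<sigma> = ln (1 + \<sigma> * x)"
  have "0 < x"
    using assms tau_pos by (simp add: x_def)
  then have "0 < L1" "0 < L\<sigma>"
    using assms by (simp_all add: L1_def L\<sigma>_def ln_gt_zero)
  have t_ratio: "tpt a T N s / a = 1 + s * x" for s
    using assms by (simp add: tpt_def x_def field_simps)
  have c: "ccoef \<alpha> \<sigma> a T N 1 0 = L\<sigma> powr (1 - \<alpha>) / (Gamma (1 - \<alpha>) * ((1 - \<alpha>) * L1))"
    using t_ratio[of \<sigma>] t_ratio[of 1]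
    by (simp add: ccoef_def tpt_def[of a T N 0] Gamma_two_minus assms L1_def L\<sigma>_def mult_ac)
  have "(1 - \<alpha>) * L1 \<le> \<sigma> * L1"
    using \<open>0 < L1\<close> assms by (simp add: mult_right_mono)
  also have "\<dots> \<le> L\<sigma>"
    using mult_ln_one_plus_le[of x \<sigma>] \<open>0 < x\<close> assms by (simp add: L1_def L\<sigma>_def)
  finally have "(1 - \<alpha>) * L1 \<le> L\<sigma>" .
  have "L\<sigma> powr (- \<alpha>) / Gamma (1 - \<alpha>) = L\<sigma> powr (1 - \<alpha>) / (Gamma (1 - \<alpha>) * L\<sigma>)"
    using \<open>0 < L\<sigma>\<close> powr_diff[of L\<sigma> "1 - \<alpha>" 1] by simp
  also have "\<dots> \<le> ccoef \<alpha> \<sigma> a T N 1 0"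
    unfolding c using \<open>(1 - \<alpha>) * L1 \<le> L\<sigma>\<close> \<open>0 < L1\<close> \<open>0 < L\<sigma>\<close> assms Gamma_real_pos[of "1 - \<alpha>"]
    by (intro divide_left_mono mult_left_mono) auto
  finally show ?thesis
    using t_ratio[of \<sigma>] by (simp add: L\<sigma>_def)
qed

lemma ccoef_1_ge_of_pos:
  fixes \<alpha> \<sigma> a T :: real and N k :: nat
  assumes "0 < \<alpha>" "\<alpha> < 1" "0 < \<sigma>" "0 < a" "a < T" "0 < N" "0 < k"
  shows "ln (tpt a T N (real k + \<sigma>) / a) powr (- \<alpha>) / Gamma (1 - \<alpha>) \<le> ccoef \<alpha> \<sigma> a T N 1 k"
proof -
  define t where "t = tpt a T N"
  define A where "A = ln (t (real k + \<sigma>) / t 0)"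
  define B where "B = ln (t (real k + \<sigma>) / t 1)"
  define D where "D = ln (t 1 / t 0)"
  define H where "H = ln (t 2 / t 0)"
  have t_less: "t s < t s'" if "s < s'" for s s'
    using tpt_less_tpt_iff that assms by (simp add: t_def)
  have "t 0 = a"
    by (simp add: t_def tpt_def)
  have "1 < real k + \<sigma>"
    using assms by linarith
  then have t_less_k\<sigma>: "t 1 < t (real k + \<sigma>)"
    by (rule t_less)
  have t_pos: "0 < t 0" "0 < t 1"
    using t_less[of 0 1] \<open>t 0 = a\<close> assms by auto
  have "0 < B"
    unfolding B_def using t_less_k\<sigma> t_pos by (simp add: ln_gt_zero)
  have "D = A - B"
    using t_pos t_less_k\<sigma> by (simp add: A_def B_def D_def ln_div)
  have "0 < D"
    unfolding D_def using t_less[of 0 1] t_pos by (simp add: ln_gt_zero)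
  have "D \<le> H"
    unfolding D_def H_def using t_less[of 1 2] t_less[of 0 1] t_pos
    by (simp add: divide_right_mono)
  have "B < A"
    using \<open>D = A - B\<close> \<open>0 < D\<close> by simp
  have a: "acoef \<alpha> \<sigma> a T N 1 k = A powr (1 - \<alpha>) - B powr (1 - \<alpha>)"
    by (simp add: acoef_def t_def[symmetric] A_def B_def)
  have b: "bcoef \<alpha> \<sigma> a T N 1 k
           = (2 / (1 - \<alpha> + 1) * (A powr (1 - \<alpha> + 1) - B powr (1 - \<alpha> + 1))
              - (A - B) * (A powr (1 - \<alpha>) + B powr (1 - \<alpha>))) / H"
    using \<open>D = A - B\<close>
    by (simp add: bcoef_def t_def[symmetric] A_def B_def D_def H_def add.commute one_add_one)
  have c: "ccoef \<alpha> \<sigma> a T N 1 k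
           = (acoef \<alpha> \<sigma> a T N 1 k - bcoef \<alpha> \<sigma> a T N 1 k) / (Gamma (2 - \<alpha>) * D)"
    using assms by (simp add: ccoef_def t_def[symmetric] D_def)
  have "(1 - \<alpha>) * (A - B) * A powr (- \<alpha>)
        \<le> acoef \<alpha> \<sigma> a T N 1 k - bcoef \<alpha> \<sigma> a T N 1 k"
    unfolding a b
    using powr_diff_minus_trapezoid_defect_ge[of B A H "1 - \<alpha>"] \<open>0 < B\<close> \<open>B < A\<close>
      \<open>D = A - B\<close> \<open>D \<le> H\<close> assms
    by simp
  moreover have "0 < Gamma (2 - \<alpha>) * D"
    using \<open>0 < D\<close> assms Gamma_real_pos[of "2 - \<alpha>"] by simp
  ultimately have "(1 - \<alpha>) * (A - B) * A powr (- \<alpha>) / (Gamma (2 - \<alpha>) * D)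
                   \<le> ccoef \<alpha> \<sigma> a T N 1 k"
    unfolding c by (rule divide_right_mono[OF _ less_imp_le])
  moreover have "(1 - \<alpha>) * (A - B) * A powr (- \<alpha>) / (Gamma (2 - \<alpha>) * D)
                 = A powr (- \<alpha>) / Gamma (1 - \<alpha>)"
    using \<open>0 < D\<close> \<open>D = A - B\<close> assms by (simp add: Gamma_two_minus)
  ultimately have "A powr (- \<alpha>) / Gamma (1 - \<alpha>) \<le> ccoef \<alpha> \<sigma> a T N 1 k"
    by simp
  then show ?thesis
    by (simp add: A_def t_def tpt_def)
qed

lemma ccoef_1_ge:
  fixes \<alpha> \<sigma> a T :: real and N k :: nat
  assumes "0 < \<alpha>" "\<alpha> < 1" "1 - \<alpha> \<le> \<sigma>" "\<sigma> \<le> 1" "0 < a" "a < T" "0 < N"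
  shows "ln (tpt a T N (real k + \<sigma>) / a) powr (- \<alpha>) / Gamma (1 - \<alpha>) \<le> ccoef \<alpha> \<sigma> a T N 1 k"
  using ccoef_1_0_ge[of \<alpha> \<sigma> a T N] ccoef_1_ge_of_pos[of \<alpha> \<sigma> a T N k] assms
  by (cases "k = 0") auto

theorem lemma2p3:
  fixes \<alpha> \<sigma> a T :: real and N k :: nat
  assumes "0 < \<alpha>" "\<alpha> < 1" "\<sigma> = 1 - \<alpha> / 2"
    and "0 < a" "a < T" "0 < N" "k < N"
  shows "1 / ccoef \<alpha> \<sigma> a T N 1 k
         < 2 * Gamma (1 - \<alpha>) / a powr \<alpha> * ((real k + \<sigma>) * tau a T N) powr \<alpha>"
proof -
  define X where "X = (real k + \<sigma>) * tau a T N / a"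
  define A where "A = ln (tpt a T N (real k + \<sigma>) / a)"
  have "0 < X"
    using assms tau_pos by (simp add: X_def)
  have "A = ln (1 + X)"
    using assms by (simp add: A_def X_def tpt_def add_divide_distrib)
  then have "0 < A" "A \<le> X"
    using \<open>0 < X\<close> by (simp_all add: ln_add_one_self_le_self)
  have "0 < Gamma (1 - \<alpha>)"
    using assms by (simp add: Gamma_real_pos)
  have c_ge: "A powr (- \<alpha>) / Gamma (1 - \<alpha>) \<le> ccoef \<alpha> \<sigma> a T N 1 k"
    using ccoef_1_ge[of \<alpha> \<sigma> a T N k] assms by (simp add: A_def)
  have lower_pos: "0 < A powr (- \<alpha>) / Gamma (1 - \<alpha>)"
    using \<open>0 < A\<close> \<open>0 < Gamma (1 - \<alpha>)\<close> by simp
  then have "0 < ccoef \<alpha> \<sigma> a T N 1 k"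
    using c_ge by linarith
  then have "1 / ccoef \<alpha> \<sigma> a T N 1 k \<le> 1 / (A powr (- \<alpha>) / Gamma (1 - \<alpha>))"
    using c_ge lower_pos by (intro divide_left_mono mult_pos_pos) auto
  also have "\<dots> = Gamma (1 - \<alpha>) * A powr \<alpha>"
    by (simp add: powr_minus divide_inverse)
  also have "\<dots> \<le> Gamma (1 - \<alpha>) * X powr \<alpha>"
    using \<open>0 < A\<close> \<open>A \<le> X\<close> \<open>0 < Gamma (1 - \<alpha>)\<close> assms
    by (intro mult_left_mono powr_mono2) auto
  also have "\<dots> < 2 * Gamma (1 - \<alpha>) * X powr \<alpha>"
    using \<open>0 < X\<close> \<open>0 < Gamma (1 - \<alpha>)\<close> by simp
  also have "\<dots> = 2 * Gamma (1 - \<alpha>) / a powr \<alpha> * ((real k + \<sigma>) * tau a T N) powr \<alpha>"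
    using assms by (simp add: X_def powr_divide)
  finally show ?thesis .
qed

end
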